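(* For any $\mathbf{V}\in\mathbb{R}^{N\times N}$ with $\mathbf{V}\boldsymbol\mu=\boldsymbol\mu$, any $k\in[N]$ and any $t\in[T]$, $$\mathbb{E}[V_{x_o,x_t}\mid x_{T+1}=k]=q^{(k)}_t\langle\mathbf{V},\mathbf{P}\rangle_\mu+(1-q^{(k)}_t)\|\boldsymbol\mu\|^2.$$
   Context: Let $\mathbf{P}\in\mathbb{R}^{N\times N}$ have nonnegative entries with columns summing to $1$, and let $\boldsymbol\mu\in\mathbb{R}^N$ be a probability vector with $\mathbf{P}\boldsymbol\mu=\boldsymbol\mu$. Let $\mathbf{q}^{(1)},\dots,\mathbf{q}^{(N)}$ be probability vectors in $\mathbb{R}^T$. Random variables: $x_1,\dots,x_{T+1}$ i.i.d. with law $\boldsymbol\mu$ on $[N]$, and $x_o\in[N]$ with $\Pr(x_o=n\mid x_{T+1}=k,x_1,\dots,x_T)=\sum_{s=1}^Tq^{(k)}_sP_{n,x_s}$. For matrices $\mathbf{M},\mathbf{M}'$ with $N$ columns, $\langle\mathbf{M},\mathbf{M}'\rangle_\mu=\operatorname{Tr}(\mathbf{M}\operatorname{diag}(\boldsymbol\mu)\mathbf{M}'^\top)$; $\|\boldsymbol\mu\|$ is the Euclidean norm. *)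

theory Defs
  imports "HOL-Analysis.Analysis" "HOL-Library.FuncSet"
begin

text \<open>Conventions: states [N] are 0..<N, times [T] are 1..T.
  Matrices are functions nat => nat => real, entry (i,j) is M i j.
  q k s is q^{(k)}_s.  A trajectory xs assigns xs s to each s in 1..T.\<close>

definition mu_inner :: "nat \<Rightarrow> (nat \<Rightarrow> real) \<Rightarrow> (nat \<Rightarrow> nat \<Rightarrow> real) \<Rightarrow> (nat \<Rightarrow> nat \<Rightarrow> real) \<Rightarrow> real" where
  "mu_inner N mu M M' = (\<Sum>i<N. \<Sum>j<N. M i j * mu j * M' i j)"
  \<comment> \<open>Tr(M diag(mu) M'^T)\<close>

definition vnorm :: "nat \<Rightarrow> (nat \<Rightarrow> real) \<Rightarrow> real" where
  "vnorm N v = sqrt (\<Sum>i<N. (v i)^2)"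

text \<open>Conditional law of x_o given x_{T+1} = k and x_1..x_T = xs.\<close>
definition xo_law :: "nat \<Rightarrow> (nat \<Rightarrow> nat \<Rightarrow> real) \<Rightarrow> (nat \<Rightarrow> nat \<Rightarrow> real) \<Rightarrow> nat \<Rightarrow> (nat \<Rightarrow> nat) \<Rightarrow> nat \<Rightarrow> real" where
  "xo_law T P q k xs n = (\<Sum>s\<in>{1..T}. q k s * P n (xs s))"

text \<open>E[ f(x_o, x_1..x_T) | x_{T+1} = k ]: x_1..x_T i.i.d. mu, independent of x_{T+1}.\<close>
definition cond_exp :: "nat \<Rightarrow> nat \<Rightarrow> (nat \<Rightarrow> real) \<Rightarrow> (nat \<Rightarrow> nat \<Rightarrow> real) \<Rightarrow> (nat \<Rightarrow> nat \<Rightarrow> real) \<Rightarrow> nat \<Rightarrow> (nat \<Rightarrow> (nat \<Rightarrow> nat) \<Rightarrow> real) \<Rightarrow> real" where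
  "cond_exp N T mu P q k f =
     (\<Sum>xs\<in>PiE {1..T} (\<lambda>_. {..<N}). (\<Prod>s\<in>{1..T}. mu (xs s)) *
        (\<Sum>n<N. xo_law T P q k xs n * f n xs))"

end

theory Submission
  imports Defs
begin

text \<open>Split according to the time step s whose column of P the output x_o is drawn from
  (weight q k s). If s = t, the pair (x_o, x_t) has joint law P n j * mu j, which gives
  mu_inner N mu V P. If s \<noteq> t, then x_s and x_t are independent, so the expectation is
  \<Sum>n. (P mu) n * (V mu) n = \<Sum>n. (mu n)^2 by stationarity of both matrices.\<close>

definition iid_expectation :: "'i set \<Rightarrow> 's set \<Rightarrow> ('s \<Rightarrow> real) \<Rightarrow> (('i \<Rightarrow> 's) \<Rightarrow> real) \<Rightarrow> real" where
  "iid_expectation I S mu f = (\<Sum>xs\<in>PiE I (\<lambda>_. S). (\<Prod>i\<in>I. mu (xs i)) * f xs)"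

lemma iid_expectation_prod:
  assumes "finite I" "finite S"
  shows "iid_expectation I S mu (\<lambda>xs. \<Prod>i\<in>I. f i (xs i)) = (\<Prod>i\<in>I. \<Sum>y\<in>S. mu y * f i y)"
  unfolding iid_expectation_def prod.distrib[symmetric]
  by (rule prod_sum_PiE[symmetric]) (use assms in auto)

lemma iid_expectation_coord:
  assumes "finite I" "finite S" "a \<in> I" "sum mu S = 1"
  shows "iid_expectation I S mu (\<lambda>xs. g (xs a)) = (\<Sum>y\<in>S. mu y * g y)"
proof -
  have "iid_expectation I S mu (\<lambda>xs. g (xs a))
      = iid_expectation I S mu (\<lambda>xs. \<Prod>i\<in>I. if i = a then g (xs i) else 1)"
    using assms by (simp add: prod.delta)
  also have "\<dots> = (\<Prod>i\<in>I. \<Sum>y\<in>S. mu y * (if i = a then g y else 1))"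
    by (rule iid_expectation_prod[OF assms(1,2), where f = "\<lambda>i y. if i = a then g y else 1"])
  also have "\<dots> = (\<Prod>i\<in>I. if i = a then (\<Sum>y\<in>S. mu y * g y) else 1)"
    using assms(4) by (intro prod.cong) auto
  finally show ?thesis
    using assms by (simp add: prod.delta)
qed

lemma iid_expectation_two_coords:
  assumes "finite I" "finite S" "a \<in> I" "b \<in> I" "a \<noteq> b" "sum mu S = 1"
  shows "iid_expectation I S mu (\<lambda>xs. g (xs a) * h (xs b))
       = (\<Sum>y\<in>S. mu y * g y) * (\<Sum>y\<in>S. mu y * h y)"
proof -
  define f where "f i y = (if i = a then g y else 1) * (if i = b then h y else 1)" for i y
  have "iid_expectation I S mu (\<lambda>xs. g (xs a) * h (xs b))
      = iid_expectation I S mu (\<lambda>xs. \<Prod>i\<in>I. f i (xs i))"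
    using assms by (simp add: f_def prod.distrib prod.delta)
  also have "\<dots> = (\<Prod>i\<in>I. \<Sum>y\<in>S. mu y * f i y)"
    by (rule iid_expectation_prod[OF assms(1,2)])
  also have "\<dots> = (\<Prod>i\<in>I. (if i = a then (\<Sum>y\<in>S. mu y * g y) else 1)
                        * (if i = b then (\<Sum>y\<in>S. mu y * h y) else 1))"
    using assms(5,6) by (intro prod.cong) (auto simp: f_def)
  finally show ?thesis
    using assms by (simp add: prod.distrib prod.delta)
qed

lemma cond_exp_eq_sum_iid_expectation:
  "cond_exp N T mu P q k f
     = (\<Sum>n<N. \<Sum>s\<in>{1..T}. q k s * iid_expectation {1..T} {..<N} mu (\<lambda>xs. P n (xs s) * f n xs))"
proof -
  have "cond_exp N T mu P q k f
      = (\<Sum>xs\<in>PiE {1..T} (\<lambda>_. {..<N}). \<Sum>n<N. \<Sum>s\<in>{1..T}.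
           q k s * ((\<Prod>i\<in>{1..T}. mu (xs i)) * (P n (xs s) * f n xs)))"
    unfolding cond_exp_def xo_law_def
    by (simp add: sum_distrib_left sum_distrib_right mult_ac)
  also have "\<dots> = (\<Sum>n<N. \<Sum>xs\<in>PiE {1..T} (\<lambda>_. {..<N}). \<Sum>s\<in>{1..T}.
           q k s * ((\<Prod>i\<in>{1..T}. mu (xs i)) * (P n (xs s) * f n xs)))"
    by (rule sum.swap)
  also have "\<dots> = (\<Sum>n<N. \<Sum>s\<in>{1..T}. q k s * iid_expectation {1..T} {..<N} mu (\<lambda>xs. P n (xs s) * f n xs))"
    unfolding iid_expectation_def sum_distrib_left by (intro sum.cong refl sum.swap)
  finally show ?thesis .
qed

lemma sum_weighted_if_eq:
  fixes w :: "'a \<Rightarrow> real"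
  assumes "finite A" "t \<in> A" "sum w A = 1"
  shows "(\<Sum>s\<in>A. w s * (if s = t then x else y)) = w t * x + (1 - w t) * y"
proof -
  have "(\<Sum>s\<in>A. w s * (if s = t then x else y)) = (\<Sum>s\<in>A. w s * y + (if s = t then w t * (x - y) else 0))"
    by (intro sum.cong) (auto simp: algebra_simps)
  also have "\<dots> = y + w t * (x - y)"
    using assms by (simp add: sum.distrib sum_distrib_right[symmetric])
  finally show ?thesis
    by (simp add: algebra_simps)
qed

lemma vnorm_squared: "(vnorm N v)\<^sup>2 = (\<Sum>i<N. (v i)\<^sup>2)"
  unfolding vnorm_def by (simp add: sum_nonneg)

theorem lemmaB6:
  fixes N T :: nat and P V :: "nat \<Rightarrow> nat \<Rightarrow> real" and mu :: "nat \<Rightarrow> real"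
    and q :: "nat \<Rightarrow> nat \<Rightarrow> real" and k t :: nat
  assumes P_nonneg: "\<forall>i<N. \<forall>j<N. P i j \<ge> 0"
    and P_col: "\<forall>j<N. (\<Sum>i<N. P i j) = 1"
    and mu_nonneg: "\<forall>i<N. mu i \<ge> 0"
    and mu_sum: "(\<Sum>i<N. mu i) = 1"
    and P_mu: "\<forall>i<N. (\<Sum>j<N. P i j * mu j) = mu i"
    and q_nonneg: "\<forall>k'<N. \<forall>s\<in>{1..T}. q k' s \<ge> 0"
    and q_sum: "\<forall>k'<N. (\<Sum>s\<in>{1..T}. q k' s) = 1"
    and V_mu: "\<forall>i<N. (\<Sum>j<N. V i j * mu j) = mu i"
    and k: "k < N"
    and t: "t \<in> {1..T}"
  shows "cond_exp N T mu P q k (\<lambda>n xs. V n (xs t))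
           = q k t * mu_inner N mu V P + (1 - q k t) * (vnorm N mu)^2"
proof -
  define diag where "diag n = (\<Sum>j<N. mu j * (P n j * V n j))" for n
  have inner: "iid_expectation {1..T} {..<N} mu (\<lambda>xs. P n (xs s) * V n (xs t))
      = (if s = t then diag n else (mu n)\<^sup>2)" if "n < N" "s \<in> {1..T}" for n s
  proof (cases "s = t")
    case True
    then show ?thesis
      using iid_expectation_coord[of "{1..T}" "{..<N}" t mu "\<lambda>y. P n y * V n y"] t mu_sum
      by (simp add: diag_def)
  next
    case False
    then show ?thesis
      using iid_expectation_two_coords[of "{1..T}" "{..<N}" s t mu "P n" "V n"] that t mu_sum P_mu V_mu
      by (simp add: mult.commute power2_eq_square)
  qed
  have "cond_exp N T mu P q k (\<lambda>n xs. V n (xs t))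
      = (\<Sum>n<N. \<Sum>s\<in>{1..T}. q k s * (if s = t then diag n else (mu n)\<^sup>2))"
    unfolding cond_exp_eq_sum_iid_expectation
    by (intro sum.cong refl arg_cong[where f = "(*) _"] inner) auto
  also have "\<dots> = (\<Sum>n<N. q k t * diag n + (1 - q k t) * (mu n)\<^sup>2)"
    using t q_sum k by (intro sum.cong refl sum_weighted_if_eq) auto
  also have "\<dots> = q k t * mu_inner N mu V P + (1 - q k t) * (vnorm N mu)\<^sup>2"
    unfolding mu_inner_def vnorm_squared diag_def
    by (simp add: sum.distrib sum_distrib_left mult_ac)
  finally show ?thesis .
qed

end
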